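(* Let $\{p_{(R,\alpha)}(\mathbf{x})\}_{(R,\alpha)}$ be a replacement rule satisfying the Fixation Axiom and Assumptions 3 and 4, and let $g,h\in G$ with $g\sim h$. Then $d_g(\mathbf{x})=d_h(\mathbf{x})$ and $e_{g\ell}(\mathbf{x})=e_{h\ell}(\mathbf{x})$ for every state $\mathbf{x}\in\{0,1\}^G$ and every $\ell\in G$. If, furthermore, Assumption 1 holds, then $v_g=v_h$ and $w_g(\mathbf{x})=w_h(\mathbf{x})$ for every state $\mathbf{x}$.
   Context: $G$ is a finite nonempty set of genetic sites, $n=|G|$, partitioned into sets $G_i$ ($i\in I$, the individuals); $g\sim h$ means $g,h\in G_i$ for some $i$. A state is $\mathbf{x}\in\{0,1\}^G$; $\mathbf{a}$ is the all-zero and $\mathbf{A}$ the all-one state. A replacement event is $(R,\alpha)$ with $R\subseteq G$, $\alpha:R\to G$; a replacement rule gives for each state a probability distribution $\{p_{(R,\alpha)}(\mathbf{x})\}$ over events. Fixation Axiom: there exist $g\in G$, $m\ge1$, events $(R_k,\alpha_k)_{k=1}^m$ with $p_{(R_k,\alpha_k)}(\mathbf{x})>0$ for all $k,\mathbf{x}$, $g\in R_k$ for some $k$, and $\tilde\alpha_1\circ\cdots\circ\tilde\alpha_m(h)=g$ for all $h$, where $\tilde\alpha_k$ equals $\alpha_k$ on $R_k$ and the identity elsewhere. $e_{gh}(\mathbf{x})=\sum_{(R,\alpha):h\in R,\alpha(h)=g}p_{(R,\alpha)}(\mathbf{x})$, $d_g(\mathbf{x})=\sum_he_{hg}(\mathbf{x})=\sum_{(R,\alpha):g\in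 R}p_{(R,\alpha)}(\mathbf{x})$. Assumption 1: $p_{(R,\alpha)}(\mathbf{A})=p_{(R,\alpha)}(\mathbf{a})$ for all events; $e^\circ_{gh},d^\circ_g$ denote values in these states. Reproductive values: the unique $(v_g)$ with $d^\circ_gv_g=\sum_\ell e^\circ_{g\ell}v_\ell$ for all $g$ and $\sum_gv_g=n$. Fitness: $w_g(\mathbf{x})=v_g-v_gd_g(\mathbf{x})+\sum_\ell e_{g\ell}(\mathbf{x})v_\ell$. Assumption 3 (coherence of individuals): if $g\sim h$, then for each state $\mathbf{x}$ and each event $(R,\alpha)$ with $p_{(R,\alpha)}(\mathbf{x})>0$, either $g,h\in R$ or $g,h\notin R$. Assumption 4 (fair meiosis): if $(R,\alpha_1)$, $(R,\alpha_2)$ are events with the same $R$ and $\alpha_1(g)\sim\alpha_2(g)$ for all $g\in R$, then $p_{(R,\alpha_1)}(\mathbf{x})=p_{(R,\alpha_2)}(\mathbf{x})$ for every state $\mathbf{x}$. *)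

theory Defs
  imports Complex_Main "HOL-Library.FuncSet"
begin

text \<open>Genetic sites are the elements of a finite type 'g (so G = UNIV, n = CARD('g)).
  Individuals are given by a map ind :: 'g => 'i; g ~ h iff ind g = ind h.
  A state is a function 'g => bool (True = 1, False = 0).
  A replacement event (R, alpha) is represented by a pair whose second component
  is extensional on R (its values outside R are the default value undefined),
  so that events correspond bijectively to pairs (R, alpha : R -> G).\<close>

type_synonym 'g state = "'g \<Rightarrow> bool"
type_synonym 'g event = "'g set \<times> ('g \<Rightarrow> 'g)"

definition events :: "'g event set" where
  "events = {(R, \<alpha>). \<alpha> \<in> extensional R}"

definition all_one :: "'g state" where "all_one = (\<lambda>_. True)"
definition all_zero :: "'g state" where "all_zero = (\<lambda>_. False)"

definition replacement_rule :: "('g::finite state \<Rightarrow> 'g event \<Rightarrow> real) \<Rightarrow> bool" where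
  "replacement_rule p \<longleftrightarrow>
     (\<forall>x E. 0 \<le> p x E) \<and> (\<forall>x E. E \<notin> events \<longrightarrow> p x E = 0) \<and>
     (\<forall>x. (\<Sum>E\<in>events. p x E) = 1)"

definition tilde :: "'g event \<Rightarrow> 'g \<Rightarrow> 'g" where
  "tilde E h = (if h \<in> fst E then snd E h else h)"

text \<open>Fixation Axiom; the list Es = [E_1,...,E_m], and the composition
  tilde E_1 o ... o tilde E_m is computed by foldr.\<close>
definition fixation_axiom :: "('g::finite state \<Rightarrow> 'g event \<Rightarrow> real) \<Rightarrow> bool" where
  "fixation_axiom p \<longleftrightarrow>
     (\<exists>g Es. Es \<noteq> [] \<and> (\<forall>E\<in>set Es. E \<in> events \<and> (\<forall>x. 0 < p x E)) \<and>
        (\<exists>E\<in>set Es. g \<in> fst E) \<and>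
        (\<forall>h. foldr (\<lambda>E f. tilde E \<circ> f) Es id h = g))"

definition e :: "('g::finite state \<Rightarrow> 'g event \<Rightarrow> real) \<Rightarrow> 'g state \<Rightarrow> 'g \<Rightarrow> 'g \<Rightarrow> real" where
  "e p x g h = (\<Sum>E\<in>{(R, \<alpha>) \<in> events. h \<in> R \<and> \<alpha> h = g}. p x E)"

definition d :: "('g::finite state \<Rightarrow> 'g event \<Rightarrow> real) \<Rightarrow> 'g state \<Rightarrow> 'g \<Rightarrow> real" where
  "d p x g = (\<Sum>h\<in>UNIV. e p x h g)"

definition assumption1 :: "('g::finite state \<Rightarrow> 'g event \<Rightarrow> real) \<Rightarrow> bool" where
  "assumption1 p \<longleftrightarrow> (\<forall>E. p all_one E = p all_zero E)"

text \<open>Reproductive values: v solves d0_g v_g = sum_l e0_{g l} v_l and sum_g v_g = n,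
  where e0, d0 are the values in the monomorphic states (all_zero = all_one under Assumption 1).\<close>
definition repro_values :: "('g::finite state \<Rightarrow> 'g event \<Rightarrow> real) \<Rightarrow> ('g \<Rightarrow> real) \<Rightarrow> bool" where
  "repro_values p v \<longleftrightarrow>
     (\<forall>g. d p all_zero g * v g = (\<Sum>l\<in>UNIV. e p all_zero g l * v l)) \<and>
     (\<Sum>g\<in>UNIV. v g) = real (card (UNIV :: 'g set))"

definition fitness :: "('g::finite state \<Rightarrow> 'g event \<Rightarrow> real) \<Rightarrow> ('g \<Rightarrow> real) \<Rightarrow> 'g state \<Rightarrow> 'g \<Rightarrow> real" where
  "fitness p v x g = v g - v g * d p x g + (\<Sum>l\<in>UNIV. e p x g l * v l)"

definition assumption3 :: "('g \<Rightarrow> 'i) \<Rightarrow> ('g::finite state \<Rightarrow> 'g event \<Rightarrow> real) \<Rightarrow> bool" where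
  "assumption3 ind p \<longleftrightarrow>
     (\<forall>g h x E. ind g = ind h \<longrightarrow> E \<in> events \<longrightarrow> 0 < p x E \<longrightarrow>
        (g \<in> fst E \<longleftrightarrow> h \<in> fst E))"

definition assumption4 :: "('g \<Rightarrow> 'i) \<Rightarrow> ('g::finite state \<Rightarrow> 'g event \<Rightarrow> real) \<Rightarrow> bool" where
  "assumption4 ind p \<longleftrightarrow>
     (\<forall>R \<alpha>1 \<alpha>2. (R, \<alpha>1) \<in> events \<longrightarrow> (R, \<alpha>2) \<in> events \<longrightarrow>
        (\<forall>g\<in>R. ind (\<alpha>1 g) = ind (\<alpha>2 g)) \<longrightarrow> (\<forall>x. p x (R, \<alpha>1) = p x (R, \<alpha>2)))"

end

theory Submission
  imports Defs
begin

text \<open>Coherence of individuals puts \<open>g \<sim> h\<close> into exactly the same events of positive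
  probability, so \<open>d\<^sub>g = d\<^sub>h\<close>. Fair meiosis makes redirecting the parent of \<open>\<ell>\<close> from \<open>g\<close> to
  \<open>h\<close> a probability-preserving bijection between the events counted in \<open>e\<^sub>g\<^sub>\<ell>\<close> and in \<open>e\<^sub>h\<^sub>\<ell>\<close>.
  Hence the reproductive-value equations of \<open>g\<close> and \<open>h\<close> have the same coefficients, and as
  the Fixation Axiom forces \<open>d\<^sub>g > 0\<close>, they give \<open>v\<^sub>g = v\<^sub>h\<close>.\<close>

lemma d_eq_sum_events_containing:
  fixes p :: "'g::finite state \<Rightarrow> 'g event \<Rightarrow> real"
  shows "d p x g = (\<Sum>E\<in>{E\<in>events. g \<in> fst E}. p x E)"
proof -
  have "d p x g = (\<Sum>h\<in>UNIV. \<Sum>E\<in>{E\<in>{E\<in>events. g \<in> fst E}. snd E g = h}. p x E)"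
    unfolding d_def e_def by (intro sum.cong refl arg_cong2[where f=sum]) auto
  also have "\<dots> = (\<Sum>E\<in>{E\<in>events. g \<in> fst E}. p x E)"
    by (rule sum.group) auto
  finally show ?thesis .
qed

lemma d_eq_if_coherent:
  fixes p :: "'g::finite state \<Rightarrow> 'g event \<Rightarrow> real"
  assumes nonneg: "\<And>E. 0 \<le> p x E" and coherent: "assumption3 ind p" and "ind g = ind h"
  shows "d p x g = d p x h"
proof -
  have "(if g \<in> fst E then p x E else 0) = (if h \<in> fst E then p x E else 0)"
    if "E \<in> events" for E
  proof (cases "0 < p x E")
    case True
    then show ?thesis using coherent \<open>ind g = ind h\<close> that unfolding assumption3_def by metis
  next
    case False
    then show ?thesis using nonneg[of E] by simp
  qed
  then show ?thesis
    unfolding d_eq_sum_events_containing sum.inter_filter[OF finite] by (rule sum.cong[OF refl])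
qed

lemma e_eq_if_fair_meiosis:
  fixes p :: "'g::finite state \<Rightarrow> 'g event \<Rightarrow> real"
  assumes fair: "assumption4 ind p" and "ind g = ind h"
  shows "e p x g l = e p x h l"
  unfolding e_def
proof (rule sum.reindex_bij_witness[where i="\<lambda>(R, \<alpha>). (R, \<alpha>(l := g))"
                                      and j="\<lambda>(R, \<alpha>). (R, \<alpha>(l := h))"])
  fix E assume "E \<in> {(R, \<alpha>). (R, \<alpha>) \<in> events \<and> l \<in> R \<and> \<alpha> l = g}"
  then obtain R \<alpha> where E: "E = (R, \<alpha>)" "\<alpha> \<in> extensional R" "l \<in> R" "\<alpha> l = g"
    by (auto simp: events_def)
  have "(R, \<alpha>(l := h)) \<in> events" "(R, \<alpha>) \<in> events"
    using E by (auto simp: events_def extensional_def)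
  moreover have "\<forall>k\<in>R. ind ((\<alpha>(l := h)) k) = ind (\<alpha> k)"
    using E \<open>ind g = ind h\<close> by auto
  ultimately have "p x (R, \<alpha>(l := h)) = p x (R, \<alpha>)"
    using fair unfolding assumption4_def by blast
  then show "p x (case E of (R, \<alpha>) \<Rightarrow> (R, \<alpha>(l := h))) = p x E"
    using E by simp
qed (auto simp: events_def extensional_def)

lemma foldr_tilde_fixes:
  assumes "\<forall>E\<in>set Es. k \<notin> fst E"
  shows "foldr (\<lambda>E f. tilde E \<circ> f) Es id k = k"
  using assms by (induction Es) (auto simp: tilde_def)

lemma fixation_axiom_covers:
  fixes p :: "'g::finite state \<Rightarrow> 'g event \<Rightarrow> real"
  assumes "fixation_axiom p"
  shows "\<exists>E\<in>events. (\<forall>x. 0 < p x E) \<and> k \<in> fst E"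
proof -
  obtain g Es where pos: "\<forall>E\<in>set Es. E \<in> events \<and> (\<forall>x. 0 < p x E)"
    and covers_g: "\<exists>E\<in>set Es. g \<in> fst E"
    and fixates: "\<forall>h. foldr (\<lambda>E f. tilde E \<circ> f) Es id h = g"
    using assms unfolding fixation_axiom_def by blast
  have "\<exists>E\<in>set Es. k \<in> fst E"
  proof (cases "k = g")
    case False
    then show ?thesis using foldr_tilde_fixes[of Es k] fixates by auto
  qed (use covers_g in simp)
  then show ?thesis using pos by blast
qed

lemma d_pos:
  fixes p :: "'g::finite state \<Rightarrow> 'g event \<Rightarrow> real"
  assumes nonneg: "\<And>E. 0 \<le> p x E" and "fixation_axiom p"
  shows "0 < d p x k"
proof -
  obtain E where E: "E \<in> events" "0 < p x E" "k \<in> fst E"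
    using fixation_axiom_covers[OF \<open>fixation_axiom p\<close>] by blast
  then have "p x E \<le> (\<Sum>E\<in>{E\<in>events. k \<in> fst E}. p x E)"
    by (intro member_le_sum) (auto intro: nonneg)
  with E show ?thesis unfolding d_eq_sum_events_containing by simp
qed

lemma repro_values_eq:
  fixes p :: "'g::finite state \<Rightarrow> 'g event \<Rightarrow> real"
  assumes "repro_values p v"
    and d_eq: "d p all_zero g = d p all_zero h"
    and e_eq: "\<And>l. e p all_zero g l = e p all_zero h l"
    and d_pos: "0 < d p all_zero g"
  shows "v g = v h"
proof -
  have "d p all_zero g * v g = (\<Sum>l\<in>UNIV. e p all_zero g l * v l)"
    using assms(1) unfolding repro_values_def by blast
  also have "\<dots> = (\<Sum>l\<in>UNIV. e p all_zero h l * v l)"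
    using e_eq by simp
  also have "\<dots> = d p all_zero h * v h"
    using assms(1) unfolding repro_values_def by simp
  also have "\<dots> = d p all_zero g * v h"
    using d_eq by simp
  finally show ?thesis
    using d_pos by simp
qed

theorem lemma3:
  fixes p :: "'g::finite state \<Rightarrow> 'g event \<Rightarrow> real"
    and ind :: "'g \<Rightarrow> 'i"
    and g h :: 'g
  assumes "replacement_rule p"
    and "fixation_axiom p"
    and "assumption3 ind p"
    and "assumption4 ind p"
    and "ind g = ind h"
  shows "(\<forall>x l. d p x g = d p x h \<and> e p x g l = e p x h l) \<and>
         (assumption1 p \<longrightarrow>
            (\<forall>v. repro_values p v \<longrightarrow>
               v g = v h \<and> (\<forall>x. fitness p v x g = fitness p v x h)))"
proof -
  have nonneg: "\<And>x E. 0 \<le> p x E"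
    using \<open>replacement_rule p\<close> unfolding replacement_rule_def by blast
  have d_eq: "\<And>x. d p x g = d p x h"
    using d_eq_if_coherent[OF nonneg assms(3,5)] .
  have e_eq: "\<And>x l. e p x g l = e p x h l"
    using e_eq_if_fair_meiosis[OF assms(4,5)] .
  have v_eq: "v g = v h" if "repro_values p v" for v
    using repro_values_eq[OF that d_eq e_eq d_pos[OF nonneg \<open>fixation_axiom p\<close>]] .
  have fitness_eq: "fitness p v x g = fitness p v x h" if "repro_values p v" for v x
    using v_eq[OF that] d_eq e_eq unfolding fitness_def by simp
  show ?thesis
    using d_eq e_eq v_eq fitness_eq by blast
qed

end
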